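(* Let $K\subset\{1,\dots,2d\}$ be nonempty. For each $0\le n^0\le\sharp(K)$ and $0\le n^+\le\sharp(K)-n^0$, with $n^-=\sharp(K)-n^0-n^+$, the set $J^{(n^0,n^+,n^-)}_{\mathcal O_K^{\mathbb C}}$ is path connected.
   Context: Let $d\ge2$. $\mathcal B^{\mathbb C}$ is the quotient of the set of complex $2d\times4d$ matrices $(A\,|\,B)$ with $\operatorname{rank}(A\,|\,B)=2d$, $AB^*=BA^*$ (topology from $\mathbb C^{8d^2}$) by the left action $(A\,|\,B)\mapsto(TA\,|\,TB)$ of $GL(2d,\mathbb C)$, with quotient topology. For $K\subset\{1,\dots,2d\}$, $\mathcal O_K^{\mathbb C}$ is the set of classes $[A\,|\,B]$ having a representative with columns $a_i=-e_i$, $b_i=s_i$ for $i\in K$ and $a_i=s_i$, $b_i=e_i$ for $i\notin K$, where $S=(s_1,\dots,s_{2d})=(s_{lj})$ is a $2d\times2d$ Hermitian matrix (uniquely determined, denoted $S(\mathbf A)$) and $e_i$ are standard basis vectors; it carries the topology from $\mathcal B^{\mathbb C}$. For $K=\{n_1<\dots<n_{m_0}\}$, $S_K(\mathbf A)=(s_{n_in_j})_{i,j=1}^{m_0}$, and $J^{(n^0,n^+,n^-)}_{\mathcal O_K^{\mathbb C}}$ is the set of $\mathbf A\in\mathcal O_K^{\mathbb C}$ such that $S_K(\mathbf A)$ has exactly $n^0$ zero, $n^+$ positive and $n^-$ negative eigenvalues counted with multiplicity. *)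

theory Defs imports "HOL-Analysis.Analysis" "Jordan_Normal_Form.Char_Poly" begin

text \<open>Index set {1..2d} is modelled by a finite linearly ordered type 'n with CARD('n) = 2d.
  Complex 2d x 2d matrices are complex^'n^'n; a 2d x 4d matrix (A|B) is a pair (A,B),
  carrying the Euclidean topology of C^(8d^2).\<close>

definition adj_mat :: "complex^'n^'m \<Rightarrow> complex^'m^'n" where
  "adj_mat M = (\<chi> i j. cnj (M $ j $ i))"

definition hermitian_mat :: "complex^'n^'n \<Rightarrow> bool" where
  "hermitian_mat S \<longleftrightarrow> adj_mat S = S"

definition block_mat :: "complex^'n^'m \<Rightarrow> complex^'n^'m \<Rightarrow> complex^('n + 'n)^'m" where
  "block_mat A B = (\<chi> l j. case j of Inl i \<Rightarrow> A $ l $ i | Inr i \<Rightarrow> B $ l $ i)"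

definition B_pre :: "((complex^'n^'n) \<times> (complex^'n^'n)) set" where
  "B_pre = {(A, B). rank (block_mat A B) = CARD('n) \<and> A ** adj_mat B = B ** adj_mat A}"

definition orbit_cls :: "(complex^'n^'n) \<times> (complex^'n^'n) \<Rightarrow> ((complex^'n^'n) \<times> (complex^'n^'n)) set" where
  "orbit_cls p = {(T ** fst p, T ** snd p) | T. invertible T}"

definition quotient_topology :: "'a topology \<Rightarrow> ('a \<Rightarrow> 'b) \<Rightarrow> 'b topology" where
  "quotient_topology X f =
     topology (\<lambda>U. U \<subseteq> f ` topspace X \<and> openin X {x \<in> topspace X. f x \<in> U})"

definition BC_top :: "((complex^'n^'n) \<times> (complex^'n^'n)) set topology" where
  "BC_top = quotient_topology (top_of_set B_pre) orbit_cls"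

definition std_form :: "'n::finite set \<Rightarrow> complex^'n^'n \<Rightarrow> complex^'n^'n \<Rightarrow> complex^'n^'n \<Rightarrow> bool" where
  "std_form K S A B \<longleftrightarrow>
     (\<forall>i. (i \<in> K \<longrightarrow> column i A = - axis i 1 \<and> column i B = column i S) \<and>
          (i \<notin> K \<longrightarrow> column i A = column i S \<and> column i B = axis i 1))"

definition O_K :: "'n::finite set \<Rightarrow> ((complex^'n^'n) \<times> (complex^'n^'n)) set set" where
  "O_K K = {c \<in> topspace BC_top. \<exists>A B S. (A, B) \<in> c \<and> hermitian_mat S \<and> std_form K S A B}"

definition S_of :: "'n::finite set \<Rightarrow> ((complex^'n^'n) \<times> (complex^'n^'n)) set \<Rightarrow> complex^'n^'n" where
  "S_of K c = (THE S. hermitian_mat S \<and> (\<exists>A B. (A, B) \<in> c \<and> std_form K S A B))"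

type_synonym 'n cmat = "((complex, 'n) Finite_Cartesian_Product.vec, 'n) Finite_Cartesian_Product.vec"

definition S_K :: "'n::{finite,linorder} set \<Rightarrow> ('n cmat \<times> 'n cmat) set \<Rightarrow> complex Matrix.mat" where
  "S_K K c = (let ks = sorted_list_of_set K; S = S_of K c in
     Matrix.mat (card K) (card K) (\<lambda>(i, j). vec_nth (vec_nth S (ks ! i)) (ks ! j)))"

definition n_zero_eig :: "complex Matrix.mat \<Rightarrow> nat" where
  "n_zero_eig M = order 0 (char_poly M)"

definition n_pos_eig :: "complex Matrix.mat \<Rightarrow> nat" where
  "n_pos_eig M = (\<Sum>a \<in> {a. poly (char_poly M) a = 0 \<and> Im a = 0 \<and> Re a > 0}. order a (char_poly M))"

definition n_neg_eig :: "complex Matrix.mat \<Rightarrow> nat" where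
  "n_neg_eig M = (\<Sum>a \<in> {a. poly (char_poly M) a = 0 \<and> Im a = 0 \<and> Re a < 0}. order a (char_poly M))"

definition J_set :: "'n::{finite,linorder} set \<Rightarrow> nat \<Rightarrow> nat \<Rightarrow> nat \<Rightarrow> ('n cmat \<times> 'n cmat) set set" where
  "J_set K n0 np nn = {c \<in> O_K K. n_zero_eig (S_K K c) = n0 \<and> n_pos_eig (S_K K c) = np \<and> n_neg_eig (S_K K c) = nn}"

end

theory Submission
  imports Defs
begin

text \<open>Every class in \<open>O_K\<close> has a unique representative \<open>(A|B)\<close> in standard form, so
  \<open>S \<mapsto> [A_S|B_S]\<close> maps the Hermitian matrices continuously onto \<open>O_K\<close>, and \<open>J\<close> is the image of
  the Hermitian matrices whose principal \<open>K \<times> K\<close> block \<open>S_K\<close> has the prescribed inertia. That set is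
  path connected: the entries outside \<open>K \<times> K\<close> can be moved linearly, and by the spectral theorem
  the block is \<open>U D U\<^sup>*\<close> with \<open>U\<close> unitary and \<open>D\<close> real diagonal. Shrinking the eigenvalues to
  their signs, permuting them into a fixed pattern and joining \<open>U\<close> to the identity through the
  path-connected unitary group connects any two such blocks without changing the inertia.\<close>

no_notation Matrix.vec_index (infixl \<open>$\<close> 100)
no_notation Matrix.scalar_prod (infix \<open>\<bullet>\<close> 70)

section \<open>Eigenvectors of self-adjoint maps\<close>

lemma quadratic_nonpos_imp_linear_coeff_zero:
  fixes a b :: real
  assumes "\<And>t. 2 * t * a + t\<^sup>2 * b \<le> 0"
  shows "a = 0"
proof -
  define c where "c = \<bar>b\<bar> + 1"
  have c: "c > 0" "2 * c + b > 0"
    unfolding c_def by (auto simp: abs_if)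
  have "(2 * (a / c) * a + (a / c)\<^sup>2 * b) * c\<^sup>2 = a\<^sup>2 * (2 * c + b)"
    using c by (simp add: field_simps power2_eq_square)
  moreover have "(2 * (a / c) * a + (a / c)\<^sup>2 * b) * c\<^sup>2 \<le> 0"
    using assms[of "a / c"] by (simp add: mult_nonpos_nonneg)
  ultimately have "a\<^sup>2 \<le> 0"
    using c by (simp add: mult_le_0_iff)
  thus ?thesis by simp
qed

lemma selfadjoint_max_quadratic_form_imp_eigenvector:
  fixes f :: "'a::real_inner \<Rightarrow> 'a"
  assumes lin: "linear f" and sa: "\<And>x y. f x \<bullet> y = x \<bullet> f y"
    and W: "subspace W" and inv: "\<And>x. x \<in> W \<Longrightarrow> f x \<in> W"
    and uW: "u \<in> W" and nu: "norm u = 1"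
    and max: "\<And>v. v \<in> W \<Longrightarrow> v \<bullet> f v \<le> (u \<bullet> f u) * (norm v)\<^sup>2"
  shows "f u = (u \<bullet> f u) *\<^sub>R u"
proof -
  define l where "l = u \<bullet> f u"
  have orth: "y \<bullet> (f u - l *\<^sub>R u) = 0" if yW: "y \<in> W" for y
  proof (rule quadratic_nonpos_imp_linear_coeff_zero)
    fix t
    have "u + t *\<^sub>R y \<in> W" using uW yW W by (simp add: subspace_add subspace_scale)
    from max[OF this] have "(u + t *\<^sub>R y) \<bullet> f (u + t *\<^sub>R y) \<le> l * (norm (u + t *\<^sub>R y))\<^sup>2"
      by (simp add: l_def)
    moreover have "(u + t *\<^sub>R y) \<bullet> f (u + t *\<^sub>R y) = l + 2 * t * (y \<bullet> f u) + t\<^sup>2 * (y \<bullet> f y)"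
      using sa[of u y] sa[of y u] unfolding l_def
      by (simp add: linear_add[OF lin] linear_scale[OF lin] inner_add_left inner_add_right
            power2_eq_square algebra_simps inner_commute)
    moreover have "(norm (u + t *\<^sub>R y))\<^sup>2 = 1 + 2 * t * (y \<bullet> u) + t\<^sup>2 * (norm y)\<^sup>2"
    proof -
      have "(norm (u + t *\<^sub>R y))\<^sup>2 = u \<bullet> u + 2 * t * (y \<bullet> u) + t\<^sup>2 * (y \<bullet> y)"
        unfolding power2_norm_eq_inner
        by (simp add: inner_add_left inner_add_right algebra_simps power2_eq_square inner_commute)
      thus ?thesis using nu by (simp add: power2_norm_eq_inner[symmetric])
    qed
    ultimately show "2 * t * (y \<bullet> (f u - l *\<^sub>R u)) + t\<^sup>2 * (y \<bullet> f y - l * (norm y)\<^sup>2) \<le> 0"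
      by (simp add: inner_diff_right algebra_simps power2_eq_square)
  qed
  have "f u - l *\<^sub>R u \<in> W" using inv[OF uW] uW W by (simp add: subspace_diff subspace_scale)
  from orth[OF this] show ?thesis by (simp add: l_def)
qed

text \<open>The eigenvector is found as a maximiser of the quadratic form on the unit sphere of \<open>W\<close>,
  which avoids the fundamental theorem of algebra.\<close>
lemma selfadjoint_eigenvector_in_invariant_subspace:
  fixes f :: "'a::euclidean_space \<Rightarrow> 'a"
  assumes lin: "linear f" and sa: "\<And>x y. f x \<bullet> y = x \<bullet> f y"
    and W: "subspace W" and inv: "\<And>x. x \<in> W \<Longrightarrow> f x \<in> W"
    and nz: "x0 \<in> W" "x0 \<noteq> 0"
  obtains u l where "u \<in> W" "norm u = 1" "f u = l *\<^sub>R u"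
proof -
  define S where "S = W \<inter> sphere 0 1"
  have "compact S" unfolding S_def
    using closed_subspace[OF W] compact_sphere by (simp add: closed_Int_compact)
  moreover have "x0 /\<^sub>R norm x0 \<in> S" unfolding S_def using nz W
    by (simp add: subspace_scale)
  moreover have "continuous_on S (\<lambda>x. x \<bullet> f x)"
    using lin by (intro continuous_intros linear_continuous_on) (simp add: linear_conv_bounded_linear)
  ultimately obtain u where uS: "u \<in> S" and umax: "\<And>y. y \<in> S \<Longrightarrow> y \<bullet> f y \<le> u \<bullet> f u"
    using continuous_attains_sup[of S "\<lambda>x. x \<bullet> f x"] by blast
  have uW: "u \<in> W" and nu: "norm u = 1" using uS by (auto simp: S_def)
  have "v \<bullet> f v \<le> (u \<bullet> f u) * (norm v)\<^sup>2" if "v \<in> W" for v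
  proof (cases "v = 0")
    case True then show ?thesis using linear_0[OF lin] by simp
  next
    case False
    hence "v /\<^sub>R norm v \<in> S" using that W by (simp add: S_def subspace_scale)
    hence "(v /\<^sub>R norm v) \<bullet> f (v /\<^sub>R norm v) \<le> u \<bullet> f u" using umax by blast
    hence "(v \<bullet> f v) / (norm v)\<^sup>2 \<le> u \<bullet> f u"
      by (simp add: linear_scale[OF lin] power2_eq_square divide_inverse mult_ac)
    thus ?thesis using False by (simp add: divide_le_eq mult.commute)
  qed
  hence "f u = (u \<bullet> f u) *\<^sub>R u"
    using selfadjoint_max_quadratic_form_imp_eigenvector[OF lin sa W inv uW nu] by blast
  with uW nu show ?thesis by (rule that)
qed

section \<open>Complex matrices, adjoints and the complex inner product\<close>

abbreviation idm :: "complex^'n^'n" where "idm \<equiv> Finite_Cartesian_Product.mat 1"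

lemmas vec_cart_eq_iff = Finite_Cartesian_Product.vec_eq_iff

lemma if_zero_mult: "(if P then x else 0) * y = (if P then x * y else (0::'a::mult_zero))"
  by simp

lemma mult_if_zero: "y * (if P then x else 0) = (if P then y * x else (0::'a::mult_zero))"
  by simp

definition cinner :: "complex^'n \<Rightarrow> complex^'n \<Rightarrow> complex" where
  "cinner x y = (\<Sum>i\<in>UNIV. cnj (x$i) * y$i)"

definition diagm :: "('n \<Rightarrow> complex) \<Rightarrow> complex^'n^'n" where
  "diagm a = (\<chi> i j. if i = j then a i else 0)"

definition unitary :: "complex^'n^'n \<Rightarrow> bool" where
  "unitary U \<longleftrightarrow> adj_mat U ** U = idm"

definition scale_mat :: "complex \<Rightarrow> complex^'n^'n \<Rightarrow> complex^'n^'n" where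
  "scale_mat c A = (\<chi> i j. c * A$i$j)"

lemma adj_mat_nth [simp]: "adj_mat M $ i $ j = cnj (M $ j $ i)"
  by (simp add: adj_mat_def)

lemma adj_mat_adj_mat [simp]: "adj_mat (adj_mat M) = M"
  by (simp add: vec_cart_eq_iff)

lemma adj_mat_mult: "adj_mat (A ** B) = adj_mat B ** adj_mat A"
  by (simp add: vec_cart_eq_iff matrix_matrix_mult_def mult.commute)

lemma hermitian_mat_iff: "hermitian_mat M \<longleftrightarrow> (\<forall>r s. cnj (M$s$r) = M$r$s)"
  unfolding hermitian_mat_def by (auto simp: vec_cart_eq_iff)

lemma diagm_nth [simp]: "diagm a $ i $ j = (if i = j then a i else 0)"
  by (simp add: diagm_def)

lemma adj_mat_diagm: "adj_mat (diagm a) = diagm (\<lambda>i. cnj (a i))"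
  by (simp add: vec_cart_eq_iff)

lemma diagm_mult: "diagm a ** diagm b = diagm (\<lambda>i. a i * b i)"
  by (simp add: vec_cart_eq_iff matrix_matrix_mult_def if_zero_mult mult_if_zero)

lemma diagm_one: "diagm (\<lambda>i. 1) = idm"
  by (simp add: vec_cart_eq_iff Finite_Cartesian_Product.mat_def)

lemma scale_mat_nth [simp]: "scale_mat c A $ i $ j = c * A $ i $ j"
  by (simp add: scale_mat_def)

lemma scale_mat_mult_left: "scale_mat c A ** B = scale_mat c (A ** B)"
  by (simp add: vec_cart_eq_iff matrix_matrix_mult_def sum_distrib_left mult.assoc)

lemma scale_mat_mult_right: "A ** scale_mat c B = scale_mat c (A ** B)"
  by (simp add: vec_cart_eq_iff matrix_matrix_mult_def sum_distrib_left mult_ac)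

lemma scale_mat_mult_vec: "scale_mat c A *v x = c *s (A *v x)"
  by (simp add: vec_cart_eq_iff matrix_vector_mult_def sum_distrib_left mult.assoc)

lemma matrix_add_rdistrib: "(B + C) ** A = B ** A + C ** (A :: complex^'n^'n)"
  by (simp add: vec_cart_eq_iff matrix_matrix_mult_def sum.distrib distrib_right)

lemma matrix_diff_ldistrib: "A ** (B - C) = A ** B - A ** (C :: complex^'n^'n)"
  by (simp add: vec_cart_eq_iff matrix_matrix_mult_def sum_subtractf right_diff_distrib)

lemma matrix_diff_rdistrib: "(B - C) ** A = B ** A - C ** (A :: complex^'n^'n)"
  by (simp add: vec_cart_eq_iff matrix_matrix_mult_def sum_subtractf left_diff_distrib)

lemma unitary_right_inverse: "unitary U \<Longrightarrow> U ** adj_mat U = idm"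
  unfolding unitary_def using matrix_left_right_inverse by blast

lemma unitary_mult: "unitary U \<Longrightarrow> unitary V \<Longrightarrow> unitary (U ** V)"
  unfolding unitary_def adj_mat_mult by (metis matrix_mul_assoc matrix_mul_lid)

lemma unitary_conj_diagm:
  assumes V: "unitary V" and e: "\<And>i. cnj (e i) * e i = 1"
  shows "unitary (V ** diagm e ** adj_mat V)"
proof -
  have cancel: "(X ** adj_mat V) ** V = X" for X
    by (metis V matrix_mul_assoc matrix_mul_rid unitary_def)
  have merge: "(X ** diagm a) ** diagm b = X ** diagm (\<lambda>i. a i * b i)" for X a b
    by (metis diagm_mult matrix_mul_assoc)
  show ?thesis
    unfolding unitary_def
    by (simp add: adj_mat_mult adj_mat_diagm matrix_mul_assoc cancel merge e diagm_one
        unitary_right_inverse[OF V])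
qed

lemma hermitian_conj_real_diagm:
  assumes "\<And>i. cnj (d i) = d i"
  shows "hermitian_mat (U ** diagm d ** adj_mat U)"
proof -
  have "adj_mat (diagm d) = diagm d" using assms by (simp add: adj_mat_diagm)
  thus ?thesis unfolding hermitian_mat_def by (simp add: adj_mat_mult matrix_mul_assoc)
qed

lemma cinner_adj_mat: "cinner (A *v x) y = cinner x (adj_mat A *v y)"
proof -
  have "cinner (A *v x) y = (\<Sum>i\<in>UNIV. \<Sum>j\<in>UNIV. cnj (A$i$j) * cnj (x$j) * y$i)"
    by (simp add: cinner_def matrix_vector_mult_def sum_distrib_right)
  also have "\<dots> = (\<Sum>j\<in>UNIV. \<Sum>i\<in>UNIV. cnj (A$i$j) * cnj (x$j) * y$i)"
    by (rule sum.swap)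
  also have "\<dots> = cinner x (adj_mat A *v y)"
    by (simp add: cinner_def matrix_vector_mult_def sum_distrib_left mult_ac)
  finally show ?thesis .
qed

lemma inner_eq_Re_cinner: "x \<bullet> y = Re (cinner x y)"
  by (simp add: inner_vec_def cinner_def inner_complex_def Re_sum)

lemma hermitian_mat_selfadjoint: "hermitian_mat H \<Longrightarrow> (H *v x) \<bullet> y = x \<bullet> (H *v y)"
  unfolding inner_eq_Re_cinner cinner_adj_mat hermitian_mat_def by simp

lemma scaleR_cvec_nth: "(c *\<^sub>R x) $ i = of_real c * (x $ i :: complex)"
  by (simp only: vector_scaleR_component) (simp add: scaleR_conv_of_real)

lemma scaleR_eq_smult: "c *\<^sub>R (x::complex^'n) = complex_of_real c *s x"
  by (simp add: vec_cart_eq_iff scaleR_cvec_nth del: vector_scaleR_component)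

lemma cinner_smult_right [simp]: "cinner x (c *s y) = c * cinner x y"
  by (simp add: cinner_def sum_distrib_left mult_ac)

lemma cinner_smult_left [simp]: "cinner (c *s x) y = cnj c * cinner x y"
  by (simp add: cinner_def sum_distrib_left mult_ac)

lemma cinner_zero_right [simp]: "cinner x 0 = 0"
  by (simp add: cinner_def)

lemma cinner_add_right: "cinner x (y + z) = cinner x y + cinner x z"
  by (simp add: cinner_def distrib_left sum.distrib)

lemma cinner_diff_right: "cinner x (y - z) = cinner x y - cinner x z"
  by (simp add: cinner_def right_diff_distrib sum_subtractf)

lemma cinner_sum_right: "cinner x (sum f A) = (\<Sum>a\<in>A. cinner x (f a))"
  by (simp add: cinner_def sum_distrib_left sum.swap[of _ A] sum_component)

lemma cnj_cinner: "cnj (cinner x y) = cinner y x"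
  by (simp add: cinner_def mult.commute)

lemma cinner_self: "cinner x x = of_real ((norm x)\<^sup>2)"
proof -
  have "cinner x x = (\<Sum>i\<in>UNIV. of_real ((cmod (x$i))\<^sup>2))"
    unfolding cinner_def
    by (intro sum.cong refl) (simp add: complex_norm_square mult.commute del: of_real_power)
  also have "\<dots> = of_real ((norm x)\<^sup>2)"
    by (simp add: norm_vec_def L2_set_def sum_nonneg)
  finally show ?thesis .
qed

lemma axis_nth_neq: "i \<noteq> j \<Longrightarrow> axis i c $ j = 0"
  by (simp add: axis_def)

lemma cinner_axis_left: "cinner (axis i c) y = cnj c * y $ i"
  unfolding cinner_def axis_def by (simp add: if_distrib[where f = cnj] if_zero_mult cong: if_cong)

lemma cinner_axis_right: "cinner x (axis i c) = cnj (x $ i) * c"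
  unfolding cinner_def axis_def by (simp add: mult_if_zero cong: if_cong)

section \<open>Spectral theorems for matrices acting on the coordinates in \<open>K\<close>\<close>

definition vecs_on :: "'n set \<Rightarrow> (complex^'n) set" where
  "vecs_on K = {x. \<forall>i. i \<notin> K \<longrightarrow> x $ i = 0}"

definition mat_supported_on :: "'n set \<Rightarrow> complex^'n^'n \<Rightarrow> bool" where
  "mat_supported_on K N \<longleftrightarrow> (\<forall>r s. (r \<notin> K \<or> s \<notin> K) \<longrightarrow> N$r$s = 0)"

definition identity_off :: "'n set \<Rightarrow> complex^'n^'n \<Rightarrow> bool" where
  "identity_off K U \<longleftrightarrow> (\<forall>r j. (r \<notin> K \<or> j \<notin> K) \<longrightarrow> U$r$j = (if r = j then 1 else 0))"

definition orthonormal_on :: "'n set \<Rightarrow> ('n \<Rightarrow> complex^'n) \<Rightarrow> bool" where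
  "orthonormal_on F u \<longleftrightarrow> (\<forall>i\<in>F. \<forall>j\<in>F. cinner (u i) (u j) = (if i = j then 1 else 0))"

definition mat_of_cols :: "'n set \<Rightarrow> ('n \<Rightarrow> complex^'n) \<Rightarrow> complex^'n^'n" where
  "mat_of_cols K u = (\<chi> r i. if i \<in> K then u i $ r else (if r = i then 1 else 0))"

lemma subspace_vecs_on: "subspace (vecs_on K)"
  by (auto simp: subspace_def vecs_on_def)

lemma vecs_on_invariant:
  assumes "\<And>r j. r \<notin> K \<Longrightarrow> j \<in> K \<Longrightarrow> A$r$j = 0" and "x \<in> vecs_on K"
  shows "A *v x \<in> vecs_on K"
proof -
  have "A$r$j * x$j = 0" if "r \<notin> K" for r j
    using assms(1)[OF that] assms(2) by (cases "j \<in> K") (auto simp: vecs_on_def)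
  thus ?thesis
    by (auto simp: vecs_on_def matrix_vector_mult_def simp del: mult_eq_0_iff intro!: sum.neutral)
qed

lemma identity_off_mult: "identity_off K A \<Longrightarrow> identity_off K B \<Longrightarrow> identity_off K (A ** B)"
  unfolding identity_off_def matrix_matrix_mult_def
  by (auto simp: if_zero_mult mult_if_zero cong: if_cong)

lemma identity_off_adj_mat: "identity_off K A \<Longrightarrow> identity_off K (adj_mat A)"
  unfolding identity_off_def by auto

lemma identity_off_diagm: "(\<And>i. i \<notin> K \<Longrightarrow> f i = 1) \<Longrightarrow> identity_off K (diagm f)"
  unfolding identity_off_def by auto

lemma independent_complex_axes:
  fixes K :: "'n::finite set"
  defines "B \<equiv> (\<lambda>i. axis i (1::complex)) ` K \<union> (\<lambda>i. axis i \<i>) ` K"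
  shows "independent B" and "card B = card K + card K"
proof -
  have axis_inner: "axis i c1 \<bullet> axis k c2 = (if i = k then Re (cnj c1 * c2) else 0)"
    for i k and c1 c2 :: complex
    unfolding inner_eq_Re_cinner cinner_axis_left by (simp add: axis_def)
  show "independent B"
  proof (rule pairwise_orthogonal_independent)
    show "pairwise real_inner_class.orthogonal B"
    proof (unfold pairwise_def, intro ballI impI)
      fix x y assume "x \<in> B" "y \<in> B" "x \<noteq> y"
      then obtain i k c1 c2 where "x = axis i c1" "y = axis k c2" "c1 \<in> {1, \<i>}" "c2 \<in> {1, \<i>}"
        unfolding B_def by blast
      with \<open>x \<noteq> y\<close> show "real_inner_class.orthogonal x y"
        unfolding real_inner_class.orthogonal_def by (auto simp: axis_inner axis_eq_axis)
    qed
    show "0 \<notin> B"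
      unfolding B_def by auto
  qed
  have "card B = card ((\<lambda>i. axis i (1::complex)) ` K) + card ((\<lambda>i. axis i \<i>) ` K)"
    unfolding B_def by (rule card_Un_disjoint) (auto simp: axis_eq_axis)
  also have "\<dots> = card K + card K"
    by (subst (1 2) card_image) (auto simp: inj_on_def axis_eq_axis)
  finally show "card B = card K + card K" .
qed

lemma smult_in_real_span:
  fixes v :: "complex^'n"
  assumes "v \<in> C" "\<i> *s v \<in> C"
  shows "c *s v \<in> span C"
proof -
  have "c * v$i = of_real (Re c) * v$i + of_real (Im c) * (\<i> * v$i)" for i
    by (subst complex_eq[of c]) (simp add: algebra_simps)
  hence "c *s v = Re c *\<^sub>R v + Im c *\<^sub>R (\<i> *s v)"
    by (simp add: vec_cart_eq_iff scaleR_cvec_nth del: vector_scaleR_component)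
  thus ?thesis using assms by (simp add: span_add span_scale span_base)
qed

definition orth_compl_on :: "'n set \<Rightarrow> 'n set \<Rightarrow> ('n \<Rightarrow> complex^'n) \<Rightarrow> (complex^'n) set" where
  "orth_compl_on K F u = {x \<in> vecs_on K. \<forall>j\<in>F. cinner (u j) x = 0}"

lemma subspace_orth_compl_on: "subspace (orth_compl_on K F u)"
  using subspace_vecs_on[of K] unfolding orth_compl_on_def subspace_def
  by (auto simp: cinner_add_right scaleR_eq_smult)

lemma expansion_if_orth_compl_on_trivial:
  assumes triv: "orth_compl_on K F u \<subseteq> {0}"
    and uK: "\<And>j. j \<in> F \<Longrightarrow> u j \<in> vecs_on K" and on: "orthonormal_on F u" and iK: "i \<in> K"
  shows "axis i 1 = (\<Sum>j\<in>F. cinner (u j) (axis i 1) *s u j)"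
proof -
  define x where "x = axis i 1 - (\<Sum>j\<in>F. cinner (u j) (axis i 1) *s u j)"
  have "x \<in> vecs_on K"
    using iK uK by (auto simp: x_def vecs_on_def axis_def sum_component)
  moreover have "cinner (u l) x = 0" if lF: "l \<in> F" for l
  proof -
    have "cinner (u l) (\<Sum>j\<in>F. cinner (u j) (axis i 1) *s u j) = cinner (u l) (axis i 1)"
      using on lF by (simp add: cinner_sum_right orthonormal_on_def mult_if_zero)
    thus ?thesis unfolding x_def by (simp add: cinner_diff_right)
  qed
  ultimately have "x = 0" using triv by (auto simp: orth_compl_on_def)
  thus ?thesis unfolding x_def by simp
qed

text \<open>A real dimension count: otherwise the real span of the \<open>u j\<close> and \<open>\<i> u j\<close> would contain
  the \<open>2 card K\<close> independent vectors \<open>axis i 1\<close>, \<open>axis i \<i>\<close> with \<open>i \<in> K\<close>.\<close>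
lemma exists_nonzero_in_orth_compl_on:
  fixes u :: "'n::finite \<Rightarrow> complex^'n"
  assumes FK: "F \<subset> K"
    and uK: "\<And>j. j \<in> F \<Longrightarrow> u j \<in> vecs_on K" and on: "orthonormal_on F u"
  obtains x where "x \<in> orth_compl_on K F u" "x \<noteq> 0"
proof (rule ccontr)
  assume "\<not> thesis"
  with that have triv: "orth_compl_on K F u \<subseteq> {0}" by blast
  define C where "C = u ` F \<union> (\<lambda>j. \<i> *s u j) ` F"
  define B where "B = (\<lambda>i. axis i (1::complex)) ` K \<union> (\<lambda>i. axis i \<i>) ` K"
  have in_span: "(\<Sum>j\<in>F. d j *s u j) \<in> span C" for d
    by (rule span_sum, rule smult_in_real_span) (auto simp: C_def)
  have expansion: "axis i 1 = (\<Sum>j\<in>F. cinner (u j) (axis i 1) *s u j)" if "i \<in> K" for i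
    using expansion_if_orth_compl_on_trivial[OF triv uK on that] .
  have "B \<subseteq> span C"
  proof
    fix y assume "y \<in> B"
    then obtain i where iK: "i \<in> K" and y: "y = axis i 1 \<or> y = axis i \<i>" unfolding B_def by auto
    have "axis i \<i> = \<i> *s axis i 1" by (simp add: vec_cart_eq_iff axis_def)
    also have "\<dots> = (\<Sum>j\<in>F. (\<i> * cinner (u j) (axis i 1)) *s u j)"
      by (subst expansion[OF iK])
        (simp add: vec_cart_eq_iff sum_component sum_distrib_left mult.assoc)
    finally show "y \<in> span C" using y expansion[OF iK] in_span by metis
  qed
  hence "card B \<le> card C"
    using independent_span_bound[OF _ independent_complex_axes(1)[of K]] by (simp add: B_def C_def)
  also have "card C \<le> card F + card F"
    unfolding C_def by (rule order_trans[OF card_Un_le add_mono]) (auto intro: card_image_le)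
  also have "card F + card F < card K + card K"
    using psubset_card_mono[OF finite FK] by simp
  finally show False using independent_complex_axes(2)[of K] by (simp add: B_def)
qed

lemma hermitian_invariant_orth_compl_on:
  assumes h: "hermitian_mat H" and inv: "\<And>x. x \<in> vecs_on K \<Longrightarrow> H *v x \<in> vecs_on K"
    and eig: "\<And>j. j \<in> F \<Longrightarrow> \<exists>c. H *v u j = c *\<^sub>R u j"
    and x: "x \<in> orth_compl_on K F u"
  shows "H *v x \<in> orth_compl_on K F u"
proof -
  have "cinner (u j) (H *v x) = 0" if jF: "j \<in> F" for j
  proof -
    obtain c where c: "H *v u j = c *\<^sub>R u j" using eig[OF jF] by blast
    have "cinner (u j) (H *v x) = cinner (H *v u j) x"
      using h by (simp add: cinner_adj_mat hermitian_mat_def)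
    also have "\<dots> = 0" using c x jF by (simp add: orth_compl_on_def scaleR_eq_smult)
    finally show ?thesis .
  qed
  thus ?thesis using x inv by (simp add: orth_compl_on_def)
qed

lemma exists_common_eigenvector_orthogonal:
  fixes H1 H2 :: "complex^'n::finite^'n"
  assumes h1: "hermitian_mat H1" and h2: "hermitian_mat H2" and comm: "H1 ** H2 = H2 ** H1"
    and inv1: "\<And>x. x \<in> vecs_on K \<Longrightarrow> H1 *v x \<in> vecs_on K"
    and inv2: "\<And>x. x \<in> vecs_on K \<Longrightarrow> H2 *v x \<in> vecs_on K"
    and FK: "F \<subset> K" and uK: "\<And>j. j \<in> F \<Longrightarrow> u j \<in> vecs_on K" and on: "orthonormal_on F u"
    and eig1: "\<And>j. j \<in> F \<Longrightarrow> \<exists>c. H1 *v u j = c *\<^sub>R u j"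
    and eig2: "\<And>j. j \<in> F \<Longrightarrow> \<exists>c. H2 *v u j = c *\<^sub>R u j"
  obtains v l m where "v \<in> vecs_on K" "cinner v v = 1" "\<And>j. j \<in> F \<Longrightarrow> cinner (u j) v = 0"
    "H1 *v v = l *\<^sub>R v" "H2 *v v = m *\<^sub>R v"
proof -
  define W where "W = orth_compl_on K F u"
  note W_invariant = hermitian_invariant_orth_compl_on[where K = K and F = F and u = u, folded W_def]
  obtain x0 where "x0 \<in> W" "x0 \<noteq> 0"
    using exists_nonzero_in_orth_compl_on[OF FK uK on] unfolding W_def by blast
  then obtain u1 l where u1: "u1 \<in> W" "norm u1 = 1" "H1 *v u1 = l *\<^sub>R u1"
    using selfadjoint_eigenvector_in_invariant_subspace[OF matrix_vector_mul_linear
        hermitian_mat_selfadjoint[OF h1] subspace_orth_compl_on[of K F u, folded W_def]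
        W_invariant[OF h1 inv1 eig1]] by blast
  define W1 where "W1 = {x \<in> W. H1 *v x = l *\<^sub>R x}"
  have "subspace W1"
    using subspace_orth_compl_on[of K F u, folded W_def] unfolding W1_def subspace_def
    by (auto simp: matrix_vector_right_distrib linear_scale[OF matrix_vector_mul_linear]
        scaleR_right_distrib)
  moreover have "H2 *v x \<in> W1" if x: "x \<in> W1" for x
  proof -
    have "H1 *v (H2 *v x) = H2 *v (H1 *v x)"
      by (simp add: matrix_vector_mul_assoc comm)
    also have "\<dots> = l *\<^sub>R (H2 *v x)"
      using x by (simp add: W1_def linear_scale[OF matrix_vector_mul_linear])
    finally show ?thesis
      using W_invariant[OF h2 inv2 eig2] x by (simp add: W1_def)
  qed
  moreover have "u1 \<in> W1" "u1 \<noteq> 0" using u1 by (auto simp: W1_def)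
  ultimately obtain v m where v: "v \<in> W1" "norm v = 1" "H2 *v v = m *\<^sub>R v"
    using selfadjoint_eigenvector_in_invariant_subspace[OF matrix_vector_mul_linear
        hermitian_mat_selfadjoint[OF h2]] by metis
  show thesis
  proof (rule that[of v l m])
    show "v \<in> vecs_on K" "H1 *v v = l *\<^sub>R v" "\<And>j. j \<in> F \<Longrightarrow> cinner (u j) v = 0"
      using v(1) by (auto simp: W1_def W_def orth_compl_on_def)
    show "cinner v v = 1" using v(2) by (simp add: cinner_self)
  qed (fact v(3))
qed

lemma commuting_hermitian_orthonormal_eigenvectors:
  fixes H1 H2 :: "complex^'n::finite^'n"
  assumes h1: "hermitian_mat H1" and h2: "hermitian_mat H2" and comm: "H1 ** H2 = H2 ** H1"
    and inv1: "\<And>x. x \<in> vecs_on K \<Longrightarrow> H1 *v x \<in> vecs_on K"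
    and inv2: "\<And>x. x \<in> vecs_on K \<Longrightarrow> H2 *v x \<in> vecs_on K"
  obtains u a b where "\<And>i. i \<in> K \<Longrightarrow> u i \<in> vecs_on K" "orthonormal_on K u"
    "\<And>i. i \<in> K \<Longrightarrow> H1 *v u i = a i *\<^sub>R u i" "\<And>i. i \<in> K \<Longrightarrow> H2 *v u i = b i *\<^sub>R u i"
proof -
  have "\<exists>u a b. (\<forall>i\<in>F. u i \<in> vecs_on K \<and> H1 *v u i = a i *\<^sub>R u i \<and> H2 *v u i = b i *\<^sub>R u i)
      \<and> orthonormal_on F u" if "F \<subseteq> K" for F
    using finite[of F] that
  proof (induction F rule: finite_subset_induct')
    case empty
    show ?case by (simp add: orthonormal_on_def)
  next
    case (insert k F)
    then obtain u a b where IH: "\<forall>i\<in>F. u i \<in> vecs_on K \<and> H1 *v u i = a i *\<^sub>R u i \<and>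
        H2 *v u i = b i *\<^sub>R u i" "orthonormal_on F u" by blast
    have "F \<subset> K" using insert by auto
    then obtain v l m where v: "v \<in> vecs_on K" "cinner v v = 1" "\<And>j. j \<in> F \<Longrightarrow> cinner (u j) v = 0"
      "H1 *v v = l *\<^sub>R v" "H2 *v v = m *\<^sub>R v"
      using exists_common_eigenvector_orthogonal[OF h1 h2 comm inv1 inv2, of F u] IH by blast
    have "cinner v (u j) = 0" if "j \<in> F" for j
      using v(3)[OF that] cnj_cinner[of "u j" v] by simp
    with IH v insert.hyps show ?case
      by (intro exI[of _ "u(k := v)"] exI[of _ "a(k := l)"] exI[of _ "b(k := m)"])
        (auto simp: orthonormal_on_def)
  qed
  with that show thesis by blast
qed

lemma mat_of_cols_unitary:
  assumes uK: "\<And>i. i \<in> K \<Longrightarrow> u i \<in> vecs_on K" and on: "orthonormal_on K u"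
  shows "unitary (mat_of_cols K u)" and "identity_off K (mat_of_cols K u)"
proof -
  define w where "w i = (if i \<in> K then u i else axis i 1)" for i
  have col: "mat_of_cols K u $ r $ i = w i $ r" for r i
    by (simp add: mat_of_cols_def w_def axis_def)
  have "cinner (w i) (w j) = (if i = j then 1 else 0)" for i j
    using on uK[of i] uK[of j]
    by (cases "i \<in> K"; cases "j \<in> K")
      (auto simp: w_def orthonormal_on_def cinner_axis_left cinner_axis_right vecs_on_def axis_nth_neq)
  thus "unitary (mat_of_cols K u)"
    unfolding unitary_def
    by (simp add: vec_cart_eq_iff matrix_matrix_mult_def col cinner_def
        Finite_Cartesian_Product.mat_def)
  show "identity_off K (mat_of_cols K u)"
    unfolding identity_off_def using uK by (auto simp: mat_of_cols_def vecs_on_def)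
qed

lemma diagonalize_by_eigenvectors:
  assumes eig: "\<And>i. i \<in> K \<Longrightarrow> N *v u i = \<mu> i *s u i"
    and off: "\<And>r j. j \<notin> K \<Longrightarrow> N $ r $ j = (if r = j then \<mu> j else 0)"
    and U: "unitary (mat_of_cols K u)"
  shows "N = mat_of_cols K u ** diagm \<mu> ** adj_mat (mat_of_cols K u)"
proof -
  let ?U = "mat_of_cols K u"
  have "(N ** ?U) $ r $ j = (?U ** diagm \<mu>) $ r $ j" for r j
  proof (cases "j \<in> K")
    case True
    have "(N ** ?U) $ r $ j = (N *v u j) $ r"
      using True by (simp add: matrix_matrix_mult_def matrix_vector_mult_def mat_of_cols_def)
    then show ?thesis
      using True eig by (simp add: matrix_matrix_mult_def mat_of_cols_def mult_if_zero)
  next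
    case False
    then show ?thesis
      using off by (simp add: matrix_matrix_mult_def mat_of_cols_def mult_if_zero)
  qed
  hence "N ** ?U = ?U ** diagm \<mu>" by (simp add: vec_cart_eq_iff)
  have "N = N ** (?U ** adj_mat ?U)" using unitary_right_inverse[OF U] by simp
  also have "\<dots> = ?U ** diagm \<mu> ** adj_mat ?U"
    by (simp add: matrix_mul_assoc \<open>N ** ?U = ?U ** diagm \<mu>\<close>)
  finally show ?thesis .
qed

lemma hermitian_spectral_on:
  fixes H :: "complex^'n::finite^'n"
  assumes h: "hermitian_mat H" and supp: "mat_supported_on K H"
  obtains U a where "unitary U" "identity_off K U" "\<And>i. i \<notin> K \<Longrightarrow> a i = 0"
    "H = U ** diagm (\<lambda>i. complex_of_real (a i)) ** adj_mat U"
proof -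
  have "hermitian_mat (0::complex^'n^'n)" by (simp add: hermitian_mat_def vec_cart_eq_iff)
  moreover have "H ** 0 = 0 ** H" by simp
  moreover have "H *v x \<in> vecs_on K" if "x \<in> vecs_on K" for x
    using supp that by (intro vecs_on_invariant) (auto simp: mat_supported_on_def)
  moreover have "(0::complex^'n^'n) *v x \<in> vecs_on K" for x by (simp add: vecs_on_def)
  ultimately obtain u a b where u: "\<And>i. i \<in> K \<Longrightarrow> u i \<in> vecs_on K" "orthonormal_on K u"
    and eig: "\<And>i. i \<in> K \<Longrightarrow> H *v u i = a i *\<^sub>R u i"
    using commuting_hermitian_orthonormal_eigenvectors[OF h] by metis
  define a' where "a' i = (if i \<in> K then a i else 0)" for i
  have "H = mat_of_cols K u ** diagm (\<lambda>i. complex_of_real (a' i)) ** adj_mat (mat_of_cols K u)"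
    using supp eig
    by (intro diagonalize_by_eigenvectors mat_of_cols_unitary(1)[OF u])
      (auto simp: a'_def scaleR_eq_smult mat_supported_on_def)
  with mat_of_cols_unitary[OF u] show thesis
    by (intro that[of "mat_of_cols K u" a']) (auto simp: a'_def)
qed

definition herm_part :: "complex^'n^'n \<Rightarrow> complex^'n^'n" where
  "herm_part W = scale_mat (1/2) (W + adj_mat W)"

definition skew_part :: "complex^'n^'n \<Rightarrow> complex^'n^'n" where
  "skew_part W = scale_mat (-\<i>/2) (W - adj_mat W)"

lemma hermitian_herm_part: "hermitian_mat (herm_part W)"
  by (auto simp: hermitian_mat_iff herm_part_def field_simps)

lemma hermitian_skew_part: "hermitian_mat (skew_part W)"
  by (auto simp: hermitian_mat_iff skew_part_def field_simps)

lemma herm_part_add_skew_part: "W = herm_part W + scale_mat \<i> (skew_part W)"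
  by (simp add: herm_part_def skew_part_def vec_cart_eq_iff field_simps)

lemma normal_herm_part_skew_part_commute:
  assumes "W ** adj_mat W = adj_mat W ** W"
  shows "herm_part W ** skew_part W = skew_part W ** herm_part W"
proof -
  have "(W + adj_mat W) ** (W - adj_mat W) = (W - adj_mat W) ** (W + adj_mat W)"
    using assms
    by (simp add: matrix_add_ldistrib matrix_add_rdistrib matrix_diff_ldistrib matrix_diff_rdistrib)
  thus ?thesis
    by (simp add: herm_part_def skew_part_def scale_mat_mult_left scale_mat_mult_right
        vec_cart_eq_iff mult_ac)
qed

lemma unitary_eigenvalue_norm:
  assumes W: "unitary W" and eig: "W *v u = \<mu> *s u" and u: "cinner u u = 1"
  shows "cmod \<mu> = 1"
proof -
  have "cnj \<mu> * \<mu> = cinner (W *v u) (W *v u)"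
    using eig u by (simp add: mult.commute)
  also have "\<dots> = 1"
    using W u by (simp add: cinner_adj_mat matrix_vector_mul_assoc unitary_def)
  finally have "complex_of_real ((cmod \<mu>)\<^sup>2) = 1"
    by (simp add: complex_norm_square mult.commute del: of_real_power)
  hence "(cmod \<mu>)\<^sup>2 = 1" by (simp only: of_real_eq_1_iff)
  thus ?thesis using norm_ge_zero[of \<mu>] by (auto simp: power2_eq_1_iff)
qed

lemma unitary_spectral_on:
  fixes W :: "complex^'n::finite^'n"
  assumes W: "unitary W" and off: "identity_off K W"
  obtains V \<mu> where "unitary V" "identity_off K V" "\<And>i. cmod (\<mu> i) = 1" "\<And>i. i \<notin> K \<Longrightarrow> \<mu> i = 1"
    "W = V ** diagm \<mu> ** adj_mat V"
proof -
  have "W ** adj_mat W = adj_mat W ** W"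
    using W unitary_right_inverse[OF W] by (simp add: unitary_def)
  moreover have "herm_part W *v x \<in> vecs_on K" "skew_part W *v x \<in> vecs_on K" if "x \<in> vecs_on K" for x
    using off that by (auto intro!: vecs_on_invariant simp: herm_part_def skew_part_def identity_off_def)
  ultimately obtain u a b where u: "\<And>i. i \<in> K \<Longrightarrow> u i \<in> vecs_on K" "orthonormal_on K u"
    and eig: "\<And>i. i \<in> K \<Longrightarrow> herm_part W *v u i = a i *\<^sub>R u i"
      "\<And>i. i \<in> K \<Longrightarrow> skew_part W *v u i = b i *\<^sub>R u i"
    using commuting_hermitian_orthonormal_eigenvectors[OF hermitian_herm_part hermitian_skew_part
        normal_herm_part_skew_part_commute] by metis
  define \<mu> where "\<mu> i = (if i \<in> K then complex_of_real (a i) + \<i> * complex_of_real (b i) else 1)" for i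
  have W_eig: "W *v u i = \<mu> i *s u i" if "i \<in> K" for i
  proof -
    have "W *v u i = (herm_part W + scale_mat \<i> (skew_part W)) *v u i"
      by (rule arg_cong[where f = "\<lambda>X. X *v u i", OF herm_part_add_skew_part])
    also have "\<dots> = herm_part W *v u i + \<i> *s (skew_part W *v u i)"
      by (simp add: matrix_vector_mult_add_rdistrib scale_mat_mult_vec)
    finally show ?thesis
      using eig that by (simp add: scaleR_eq_smult \<mu>_def vec_cart_eq_iff algebra_simps)
  qed
  have "cmod (\<mu> i) = 1" for i
    using unitary_eigenvalue_norm[OF W W_eig] u(2) by (cases "i \<in> K") (auto simp: \<mu>_def orthonormal_on_def)
  moreover have "W = mat_of_cols K u ** diagm \<mu> ** adj_mat (mat_of_cols K u)"
    using off W_eig by (intro diagonalize_by_eigenvectors mat_of_cols_unitary(1)[OF u])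
      (auto simp: \<mu>_def identity_off_def)
  ultimately show thesis
    using mat_of_cols_unitary[OF u] by (intro that) (auto simp: \<mu>_def)
qed

section \<open>Paths of conjugated diagonal matrices\<close>

lemma continuous_on_matrix_mult:
  fixes f g :: "real \<Rightarrow> complex^'n^'n"
  assumes "continuous_on S f" "continuous_on S g"
  shows "continuous_on S (\<lambda>t. f t ** g t)"
  unfolding matrix_matrix_mult_def
  by (intro continuous_on_vec_lambda continuous_on_sum continuous_on_mult continuous_on_component assms)

lemma continuous_on_adj_mat:
  fixes f :: "real \<Rightarrow> complex^'n^'n"
  assumes "continuous_on S f"
  shows "continuous_on S (\<lambda>t. adj_mat (f t))"
  unfolding adj_mat_def
  by (intro continuous_on_vec_lambda continuous_on_cnj continuous_on_component assms)

lemma continuous_on_diagm: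
  assumes "\<And>i. continuous_on S (h i)"
  shows "continuous_on S (\<lambda>t. diagm (\<lambda>i. h i t))"
  unfolding diagm_def
proof (intro continuous_on_vec_lambda)
  fix i j show "continuous_on S (\<lambda>t. if i = j then h i t else 0)"
    by (cases "i = j") (simp_all add: assms)
qed

definition unitary_on :: "'n set \<Rightarrow> (complex^'n^'n) set" where
  "unitary_on K = {U. unitary U \<and> identity_off K U}"

lemma unitary_on_mult: "U \<in> unitary_on K \<Longrightarrow> V \<in> unitary_on K \<Longrightarrow> U ** V \<in> unitary_on K"
  by (simp add: unitary_on_def unitary_mult identity_off_mult)

lemma path_component_unitary_on_idm:
  fixes W :: "complex^'n::finite^'n"
  assumes "W \<in> unitary_on K"
  shows "path_component (unitary_on K) idm W"
proof -
  obtain V \<mu> where V: "unitary V" "identity_off K V" and \<mu>: "\<And>i. cmod (\<mu> i) = 1"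
    and \<mu>_off: "\<And>i. i \<notin> K \<Longrightarrow> \<mu> i = 1" and W: "W = V ** diagm \<mu> ** adj_mat V"
    using unitary_spectral_on assms unfolding unitary_on_def by blast
  define g where "g t = V ** diagm (\<lambda>i. cis (t * Arg (\<mu> i))) ** adj_mat V" for t
  have "cis (Arg (\<mu> i)) = \<mu> i" for i
  proof -
    have "\<mu> i \<noteq> 0" using \<mu>[of i] by auto
    thus ?thesis using \<mu>[of i] by (simp add: cis_Arg sgn_div_norm)
  qed
  hence "pathfinish g = W" by (simp add: pathfinish_def g_def W)
  moreover have "pathstart g = idm"
    by (simp add: pathstart_def g_def diagm_one unitary_right_inverse[OF V(1)])
  moreover have "path g"
    unfolding path_def g_def
    by (intro continuous_on_matrix_mult continuous_on_adj_mat continuous_on_diagm continuous_intros)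
  moreover have "path_image g \<subseteq> unitary_on K"
    using V \<mu>_off unfolding path_image_def g_def unitary_on_def
    by (auto intro!: unitary_conj_diagm identity_off_mult identity_off_adj_mat identity_off_diagm
        simp: cis_cnj cis_mult)
  ultimately show ?thesis unfolding path_component_def by blast
qed

lemma path_connected_unitary_on: "path_connected (unitary_on (K :: 'n::finite set))"
  unfolding path_connected_component
  using path_component_unitary_on_idm path_component_sym path_component_trans by metis

lemma path_connected_unitary_orbit:
  "path_connected ((\<lambda>U. U ** D ** adj_mat U) ` unitary_on (K :: 'n::finite set))"
proof (rule path_connected_continuous_image[OF _ path_connected_unitary_on])
  show "continuous_on (unitary_on K) (\<lambda>U. U ** D ** adj_mat U)"
    unfolding matrix_matrix_mult_def adj_mat_def
    by (intro continuous_on_vec_lambda continuous_on_sum continuous_intros continuous_on_component)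
qed

definition sign_counts :: "'n set \<Rightarrow> ('n \<Rightarrow> real) \<Rightarrow> nat \<times> nat \<times> nat" where
  "sign_counts K a = (card {k \<in> K. a k = 0}, card {k \<in> K. a k > 0}, card {k \<in> K. a k < 0})"

definition conj_diag_set :: "'n set \<Rightarrow> nat \<times> nat \<times> nat \<Rightarrow> (complex^'n^'n) set" where
  "conj_diag_set K c = {U ** diagm (\<lambda>i. complex_of_real (a i)) ** adj_mat U | U a.
      U \<in> unitary_on K \<and> (\<forall>i. i \<notin> K \<longrightarrow> a i = 0) \<and> sign_counts K a = c}"

lemma conj_diag_setI:
  "U \<in> unitary_on K \<Longrightarrow> (\<And>i. i \<notin> K \<Longrightarrow> a i = 0) \<Longrightarrow> sign_counts K a = c \<Longrightarrow>
   U ** diagm (\<lambda>i. complex_of_real (a i)) ** adj_mat U \<in> conj_diag_set K c"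
  unfolding conj_diag_set_def by blast

lemma sign_counts_sgn: "sign_counts K (\<lambda>i. sgn (a i)) = sign_counts K a"
  by (simp add: sign_counts_def sgn_0_0 sgn_greater sgn_less)

lemma sign_counts_homotopy_sgn:
  fixes a :: "'n \<Rightarrow> real"
  assumes "0 \<le> t" "t \<le> 1"
  shows "sign_counts K (\<lambda>i. (1 - t) * a i + t * sgn (a i)) = sign_counts K a"
proof -
  have sgn_eq: "sgn ((1 - t) * x + t * sgn x) = sgn x" for x :: real
  proof (cases x "0::real" rule: linorder_cases)
    case less
    have "(1 - t) * x \<le> 0" using assms less by (simp add: mult_nonneg_nonpos)
    thus ?thesis using assms less by (cases "t = 0") (auto simp: sgn_if)
  next
    case greater
    have "(1 - t) * x \<ge> 0" using assms greater by simp
    hence "(1 - t) * x + t * sgn x > 0"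
      using assms greater by (cases "t = 0") (simp_all add: add_nonneg_pos)
    thus ?thesis using greater by simp
  qed simp
  have "sign_counts K (\<lambda>i. (1 - t) * a i + t * sgn (a i))
      = sign_counts K (\<lambda>i. sgn ((1 - t) * a i + t * sgn (a i)))"
    by (rule sign_counts_sgn[symmetric])
  also have "\<dots> = sign_counts K (\<lambda>i. sgn (a i))"
    by (simp only: sgn_eq)
  finally show ?thesis by (simp only: sign_counts_sgn)
qed

lemma card_sgn_fibre:
  "card {k \<in> K. sgn (a k) = v} =
    (if v = 0 then fst (sign_counts K a) else if v = 1 then fst (snd (sign_counts K a))
     else if v = -1 then snd (snd (sign_counts K a)) else 0)"
proof -
  have "{k \<in> K. sgn (a k) = v} = (if v = 0 then {k \<in> K. a k = 0} else if v = 1 then {k \<in> K. a k > 0}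
      else if v = -1 then {k \<in> K. a k < 0} else {})"
    by (auto simp: sgn_if)
  thus ?thesis by (simp add: sign_counts_def)
qed

lemma bij_betw_fibres_card_eq:
  assumes "finite K" and fibres: "\<And>v. card {k \<in> K. f k = v} = card {k \<in> K. g k = v}"
  obtains \<sigma> where "bij_betw \<sigma> K K" "\<And>k. k \<in> K \<Longrightarrow> f (\<sigma> k) = g k"
proof -
  have "\<exists>h. bij_betw h {k \<in> K. g k = v} {k \<in> K. f k = v}" for v
    using fibres[of v] \<open>finite K\<close> by (intro finite_same_card_bij) auto
  then obtain h where h: "\<And>v. bij_betw (h v) {k \<in> K. g k = v} {k \<in> K. f k = v}" by metis
  define \<sigma> where "\<sigma> k = h (g k) k" for k
  have \<sigma>: "\<sigma> k \<in> K" "f (\<sigma> k) = g k" if "k \<in> K" for k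
    using bij_betwE[OF h[of "g k"]] that by (auto simp: \<sigma>_def)
  have "inj_on \<sigma> K"
  proof (rule inj_onI)
    fix i j assume ij: "i \<in> K" "j \<in> K" "\<sigma> i = \<sigma> j"
    hence "g i = g j" using \<sigma> by metis
    thus "i = j" using ij bij_betw_imp_inj_on[OF h[of "g i"]] by (auto simp: \<sigma>_def inj_on_def)
  qed
  moreover have "\<sigma> ` K = K"
    using endo_inj_surj[OF \<open>finite K\<close> _ \<open>inj_on \<sigma> K\<close>] \<sigma> by blast
  ultimately show thesis using that \<sigma> by (auto simp: bij_betw_def)
qed

lemma permutation_conj_diagm:
  fixes d1 d2 :: "'n::finite \<Rightarrow> complex"
  assumes \<sigma>: "bij_betw \<sigma> K K" and on: "\<And>k. k \<in> K \<Longrightarrow> d1 (\<sigma> k) = d2 k"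
    and off: "\<And>i. i \<notin> K \<Longrightarrow> d1 i = d2 i"
  obtains P where "P \<in> unitary_on K" "diagm d1 = P ** diagm d2 ** adj_mat P"
proof -
  define \<tau> where "\<tau> j = (if j \<in> K then \<sigma> j else j)" for j
  have \<tau>K: "\<tau> j \<in> K \<longleftrightarrow> j \<in> K" for j
    using bij_betwE[OF \<sigma>] by (auto simp: \<tau>_def)
  have \<tau>_eq: "\<tau> i = \<tau> j \<longleftrightarrow> i = j" for i j
    using \<tau>K[of i] \<tau>K[of j] bij_betw_imp_inj_on[OF \<sigma>] by (auto simp: \<tau>_def inj_on_def)
  define P :: "complex^'n^'n" where "P = (\<chi> r j. if r = \<tau> j then 1 else 0)"
  have "unitary P"
    unfolding unitary_def
    by (simp add: P_def vec_cart_eq_iff matrix_matrix_mult_def Finite_Cartesian_Product.mat_def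
        if_zero_mult mult_if_zero \<tau>_eq if_distrib[where f = cnj] cong: if_cong)
  moreover have "identity_off K P"
    unfolding identity_off_def P_def using \<tau>K by (auto simp: \<tau>_def)
  moreover have "diagm d1 ** P = P ** diagm d2"
    using on off
    by (auto simp: P_def \<tau>_def vec_cart_eq_iff matrix_matrix_mult_def if_zero_mult mult_if_zero)
  hence "diagm d1 = P ** diagm d2 ** adj_mat P"
    using unitary_right_inverse[OF \<open>unitary P\<close>]
    by (metis matrix_mul_assoc matrix_mul_rid)
  ultimately show thesis by (intro that) (auto simp: unitary_on_def)
qed

lemma path_component_conj_diag_set_sgn:
  assumes "U \<in> unitary_on K" "\<And>i. i \<notin> K \<Longrightarrow> a i = 0" "sign_counts K a = c"
  shows "path_component (conj_diag_set K c) (U ** diagm (\<lambda>i. complex_of_real (a i)) ** adj_mat U)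
           (U ** diagm (\<lambda>i. complex_of_real (sgn (a i))) ** adj_mat U)"
proof -
  define g where
    "g t = U ** diagm (\<lambda>i. complex_of_real ((1 - t) * a i + t * sgn (a i))) ** adj_mat U" for t
  have "path g" unfolding path_def g_def
    by (intro continuous_on_matrix_mult continuous_on_diagm continuous_intros)
  moreover have "g t \<in> conj_diag_set K c" if "t \<in> {0..1}" for t
    unfolding g_def using assms sign_counts_homotopy_sgn[of t K a] that
    by (intro conj_diag_setI) auto
  hence "path_image g \<subseteq> conj_diag_set K c" by (auto simp: path_image_def)
  ultimately show ?thesis
    unfolding path_component_def by (auto simp: g_def pathstart_def pathfinish_def)
qed

lemma sgn_diagm_unitary_similar:
  fixes a1 a2 :: "'n::finite \<Rightarrow> real"
  assumes off: "\<And>i. i \<notin> K \<Longrightarrow> a1 i = 0" "\<And>i. i \<notin> K \<Longrightarrow> a2 i = 0"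
    and counts: "sign_counts K a1 = sign_counts K a2"
  obtains P where "P \<in> unitary_on K"
    "diagm (\<lambda>i. complex_of_real (sgn (a1 i))) = P ** diagm (\<lambda>i. complex_of_real (sgn (a2 i))) ** adj_mat P"
proof -
  have fibres: "card {k \<in> K. sgn (a1 k) = v} = card {k \<in> K. sgn (a2 k) = v}" for v
    using counts by (simp add: card_sgn_fibre)
  obtain \<sigma> where \<sigma>: "bij_betw \<sigma> K K" "\<And>k. k \<in> K \<Longrightarrow> sgn (a1 (\<sigma> k)) = sgn (a2 k)"
    using bij_betw_fibres_card_eq[OF finite fibres] by blast
  show thesis
  proof (rule permutation_conj_diagm[OF \<sigma>(1), of "\<lambda>i. complex_of_real (sgn (a1 i))"
        "\<lambda>i. complex_of_real (sgn (a2 i))"])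
  qed (use \<sigma>(2) off that in auto)
qed

lemma path_connected_conj_diag_set: "path_connected (conj_diag_set (K :: 'n::finite set) c)"
  unfolding path_connected_component
proof (intro ballI)
  fix B1 B2 assume "B1 \<in> conj_diag_set K c" "B2 \<in> conj_diag_set K c"
  then obtain U1 a1 U2 a2 where U: "U1 \<in> unitary_on K" "U2 \<in> unitary_on K"
    and a_off: "\<And>i. i \<notin> K \<Longrightarrow> a1 i = 0" "\<And>i. i \<notin> K \<Longrightarrow> a2 i = 0"
    and a_counts: "sign_counts K a1 = c" "sign_counts K a2 = c"
    and B: "B1 = U1 ** diagm (\<lambda>i. complex_of_real (a1 i)) ** adj_mat U1"
      "B2 = U2 ** diagm (\<lambda>i. complex_of_real (a2 i)) ** adj_mat U2"
    unfolding conj_diag_set_def by blast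
  define D where "D s = diagm (\<lambda>i. complex_of_real (sgn (s i)))" for s :: "'n \<Rightarrow> real"
  define Orb where "Orb = (\<lambda>U. U ** D a2 ** adj_mat U) ` unitary_on K"
  have same_counts: "sign_counts K a1 = sign_counts K a2" using a_counts by simp
  obtain P where P: "P \<in> unitary_on K" "D a1 = P ** D a2 ** adj_mat P"
    using sgn_diagm_unitary_similar[OF a_off same_counts] unfolding D_def by auto
  have "Orb \<subseteq> conj_diag_set K c"
  proof (unfold Orb_def, rule image_subsetI)
    fix U assume "U \<in> unitary_on K"
    thus "U ** D a2 ** adj_mat U \<in> conj_diag_set K c"
      unfolding D_def using a_off(2) a_counts(2) sign_counts_sgn[of K a2]
      by (intro conj_diag_setI) auto
  qed
  moreover have "U1 ** D a1 ** adj_mat U1 \<in> Orb"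
  proof -
    have "U1 ** D a1 ** adj_mat U1 = (U1 ** P) ** D a2 ** adj_mat (U1 ** P)"
      unfolding P(2) by (simp add: adj_mat_mult matrix_mul_assoc)
    thus ?thesis unfolding Orb_def using unitary_on_mult[OF U(1) P(1)] by blast
  qed
  moreover have "U2 ** D a2 ** adj_mat U2 \<in> Orb"
    unfolding Orb_def using U(2) by blast
  ultimately have "path_component (conj_diag_set K c) (U1 ** D a1 ** adj_mat U1) (U2 ** D a2 ** adj_mat U2)"
    using path_connected_unitary_orbit[of "D a2" K] path_component_of_subset
    unfolding path_connected_component Orb_def[symmetric] by blast
  moreover have "path_component (conj_diag_set K c) B1 (U1 ** D a1 ** adj_mat U1)"
    unfolding B D_def by (rule path_component_conj_diag_set_sgn[OF U(1) a_off(1) a_counts(1)])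
  moreover have "path_component (conj_diag_set K c) B2 (U2 ** D a2 ** adj_mat U2)"
    unfolding B D_def by (rule path_component_conj_diag_set_sgn[OF U(2) a_off(2) a_counts(2)])
  ultimately show "path_component (conj_diag_set K c) B1 B2"
    by (meson path_component_sym path_component_trans)
qed

section \<open>Inertia of principal submatrices\<close>

definition principal_submat :: "'n::{finite,linorder} set \<Rightarrow> 'n cmat \<Rightarrow> complex Matrix.mat" where
  "principal_submat K A = Matrix.mat (card K) (card K)
     (\<lambda>(i, j). A $ (sorted_list_of_set K ! i) $ (sorted_list_of_set K ! j))"

definition inertia :: "complex Matrix.mat \<Rightarrow> nat \<times> nat \<times> nat" where
  "inertia M = (n_zero_eig M, n_pos_eig M, n_neg_eig M)"

lemma S_K_eq_principal_submat: "S_K K c = principal_submat K (S_of K c)"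
  by (simp add: S_K_def principal_submat_def Let_def)

lemma sorted_list_of_set_nth_mem:
  fixes K :: "'n::{finite,linorder} set"
  shows "i < card K \<Longrightarrow> sorted_list_of_set K ! i \<in> K"
  using nth_mem[of i "sorted_list_of_set K"] by simp

lemma sorted_list_of_set_nth_eq_iff:
  fixes K :: "'n::{finite,linorder} set"
  shows "i < card K \<Longrightarrow> j < card K \<Longrightarrow> sorted_list_of_set K ! i = sorted_list_of_set K ! j \<longleftrightarrow> i = j"
  by (simp add: nth_eq_iff_index_eq)

lemma bij_betw_sorted_list_of_set_nth:
  fixes K :: "'n::{finite,linorder} set"
  shows "bij_betw (\<lambda>i. sorted_list_of_set K ! i) {..<card K} K"
  using bij_betw_nth[of "sorted_list_of_set K" "{..<card K}" K] by simp

lemma card_sorted_list_of_set_nth: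
  fixes K :: "'n::{finite,linorder} set"
  shows "card {i. i < card K \<and> P (sorted_list_of_set K ! i)} = card {k \<in> K. P k}"
proof (rule bij_betw_same_card, rule bij_betw_subset[OF bij_betw_sorted_list_of_set_nth])
  show "(\<lambda>i. sorted_list_of_set K ! i) ` {i. i < card K \<and> P (sorted_list_of_set K ! i)} = {k \<in> K. P k}"
    using bij_betw_imp_surj_on[OF bij_betw_sorted_list_of_set_nth[of K]]
    by (auto simp: sorted_list_of_set_nth_mem)
qed auto

lemma principal_submat_carrier [simp]: "principal_submat K A \<in> carrier_mat (card K) (card K)"
  by (simp add: principal_submat_def)

lemma principal_submat_dim [simp]:
  "dim_row (principal_submat K A) = card K" "dim_col (principal_submat K A) = card K"
  by (simp_all add: principal_submat_def)

lemma principal_submat_nth [simp]: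
  "i < card K \<Longrightarrow> j < card K \<Longrightarrow>
    principal_submat K A $$ (i, j) = A $ (sorted_list_of_set K ! i) $ (sorted_list_of_set K ! j)"
  by (simp add: principal_submat_def)

lemma principal_submat_cong:
  "(\<And>r s. r \<in> K \<Longrightarrow> s \<in> K \<Longrightarrow> A$r$s = B$r$s) \<Longrightarrow> principal_submat K A = principal_submat K B"
  by (rule eq_matI) (auto simp: sorted_list_of_set_nth_mem)

lemma principal_submat_mult:
  fixes K :: "'n::{finite,linorder} set"
  assumes A: "\<And>r j. r \<in> K \<Longrightarrow> j \<notin> K \<Longrightarrow> A$r$j = 0"
  shows "principal_submat K (A ** B) = principal_submat K A * principal_submat K B"
proof (rule eq_matI)
  fix i j assume "i < dim_row (principal_submat K A * principal_submat K B)"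
    and "j < dim_col (principal_submat K A * principal_submat K B)"
  hence ij: "i < card K" "j < card K" by auto
  let ?ks = "sorted_list_of_set K"
  have "(principal_submat K A * principal_submat K B) $$ (i, j)
      = (\<Sum>l\<in>{..<card K}. A $ (?ks!i) $ (?ks!l) * B $ (?ks!l) $ (?ks!j))"
    using ij by (simp add: scalar_prod_def atLeast0LessThan)
  also have "\<dots> = (\<Sum>k\<in>K. A $ (?ks!i) $ k * B $ k $ (?ks!j))"
    using sum.reindex_bij_betw[OF bij_betw_sorted_list_of_set_nth] by simp
  also have "\<dots> = (\<Sum>k\<in>UNIV. A $ (?ks!i) $ k * B $ k $ (?ks!j))"
    using A sorted_list_of_set_nth_mem[OF ij(1)] by (intro sum.mono_neutral_left) auto
  finally show "principal_submat K (A ** B) $$ (i, j) = (principal_submat K A * principal_submat K B) $$ (i, j)"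
    using ij by (simp add: matrix_matrix_mult_def)
qed auto

lemma principal_submat_idm: "principal_submat K idm = 1\<^sub>m (card K)"
  by (rule eq_matI) (auto simp: Finite_Cartesian_Product.mat_def sorted_list_of_set_nth_eq_iff)

lemma char_poly_principal_submat_unitary_conj:
  fixes K :: "'n::{finite,linorder} set"
  assumes U: "U \<in> unitary_on K" and D: "\<And>r j. r \<in> K \<Longrightarrow> j \<notin> K \<Longrightarrow> D$r$j = 0"
  shows "char_poly (principal_submat K (U ** D ** adj_mat U)) = char_poly (principal_submat K D)"
proof -
  have U_off: "U$r$j = 0" "adj_mat U $r$j = 0" if "r \<in> K" "j \<notin> K" for r j
    using U that by (auto simp: unitary_on_def identity_off_def)
  have "(U ** D)$r$j = 0" if "r \<in> K" "j \<notin> K" for r j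
  proof -
    have "U$r$k * D$k$j = 0" for k
      using U_off(1)[OF that(1)] D[OF _ that(2)] by (cases "k \<in> K") auto
    thus ?thesis by (auto simp: matrix_matrix_mult_def intro!: sum.neutral)
  qed
  hence "principal_submat K (U ** D ** adj_mat U)
      = principal_submat K U * principal_submat K D * principal_submat K (adj_mat U)"
    using U_off by (simp add: principal_submat_mult)
  moreover have "principal_submat K U * principal_submat K (adj_mat U) = 1\<^sub>m (card K)"
    "principal_submat K (adj_mat U) * principal_submat K U = 1\<^sub>m (card K)"
    using U U_off unitary_right_inverse[of U]
    by (simp_all add: principal_submat_mult[symmetric] principal_submat_idm unitary_on_def unitary_def)
  ultimately have "similar_mat_wit (principal_submat K (U ** D ** adj_mat U)) (principal_submat K D)
      (principal_submat K U) (principal_submat K (adj_mat U))"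
    unfolding similar_mat_wit_def Let_def by auto
  hence "similar_mat (principal_submat K (U ** D ** adj_mat U)) (principal_submat K D)"
    unfolding similar_mat_def by blast
  thus ?thesis by (rule char_poly_similar)
qed

lemma order_prod_linear_factors:
  "order z (\<Prod>x\<leftarrow>xs. [:- x, 1:]) = count_list xs (z::complex)"
proof (induction xs)
  case Nil
  then show ?case by (simp add: order_0I)
next
  case (Cons x xs)
  have "0 \<notin> set (map (\<lambda>x. [:- x, 1:]) xs)" by auto
  hence "(\<Prod>x\<leftarrow>xs. [:- x, 1:]) \<noteq> (0::complex poly)"
    using prod_list_zero_iff[of "map (\<lambda>x. [:- x, 1:]) xs"] by metis
  hence "[:- x, 1:] * (\<Prod>x\<leftarrow>xs. [:- x, 1:]) \<noteq> 0" by (simp only: mult_eq_0_iff) simp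
  hence "order z ([:- x, 1:] * (\<Prod>x\<leftarrow>xs. [:- x, 1:]))
      = order z [:- x, 1:] + order z (\<Prod>x\<leftarrow>xs. [:- x, 1:])"
    by (rule order_mult)
  then show ?case using Cons by (simp add: order_linear')
qed

lemma poly_prod_linear_factors_eq_0:
  "poly (\<Prod>x\<leftarrow>xs. [:- x, 1:]) z = 0 \<longleftrightarrow> (z::complex) \<in> set xs"
  by (induction xs) auto

lemma length_filter_eq_sum_count_list:
  "length (filter Q xs) = (\<Sum>z\<in>{z \<in> set xs. Q z}. count_list xs z)"
proof -
  have "length (filter Q xs) = size (filter_mset Q (mset xs))"
    by (metis mset_filter size_mset)
  also have "\<dots> = (\<Sum>z\<in>set_mset (filter_mset Q (mset xs)). count (filter_mset Q (mset xs)) z)"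
    by (rule size_multiset_overloaded_eq)
  also have "\<dots> = (\<Sum>z\<in>{z \<in> set xs. Q z}. count_list xs z)"
    by (intro sum.cong) (auto simp: count_mset)
  finally show ?thesis .
qed

lemma sum_order_prod_linear_factors:
  fixes cs :: "complex list"
  shows "(\<Sum>a \<in> {a. poly (\<Prod>x\<leftarrow>cs. [:- x, 1:]) a = 0 \<and> Q a}. order a (\<Prod>x\<leftarrow>cs. [:- x, 1:]))
    = length (filter Q cs)"
  unfolding length_filter_eq_sum_count_list
  by (rule sum.cong) (auto simp: order_prod_linear_factors poly_prod_linear_factors_eq_0)

lemma inertia_char_poly_linear_factors:
  assumes "char_poly M = (\<Prod>x\<leftarrow>cs. [:- x, 1:])"
  shows "inertia M = (length (filter (\<lambda>z. z = 0) cs), length (filter (\<lambda>z. Im z = 0 \<and> Re z > 0) cs),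
    length (filter (\<lambda>z. Im z = 0 \<and> Re z < 0) cs))"
proof -
  have "order 0 (char_poly M) = length (filter (\<lambda>z. z = 0) cs)"
    unfolding assms order_prod_linear_factors count_list_eq_length_filter
    by (rule arg_cong[where f = length], rule filter_cong) auto
  thus ?thesis
    unfolding inertia_def n_zero_eig_def n_pos_eig_def n_neg_eig_def
    using sum_order_prod_linear_factors[of cs "\<lambda>z. Im z = 0 \<and> Re z > 0"]
      sum_order_prod_linear_factors[of cs "\<lambda>z. Im z = 0 \<and> Re z < 0"]
    by (simp add: assms)
qed

lemma inertia_eq_if_char_poly_eq: "char_poly A = char_poly B \<Longrightarrow> inertia A = inertia B"
  by (simp add: inertia_def n_zero_eig_def n_pos_eig_def n_neg_eig_def)

lemma inertia_principal_submat_real_diagm: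
  fixes K :: "'n::{finite,linorder} set"
  shows "inertia (principal_submat K (diagm (\<lambda>i. complex_of_real (a i)))) = sign_counts K a"
proof -
  let ?ks = "sorted_list_of_set K"
  define cs where "cs = map (\<lambda>i. complex_of_real (a (?ks ! i))) [0..<card K]"
  have "upper_triangular (principal_submat K (diagm (\<lambda>i. complex_of_real (a i))))"
    unfolding upper_triangular_def by (auto simp: sorted_list_of_set_nth_eq_iff)
  hence "char_poly (principal_submat K (diagm (\<lambda>i. complex_of_real (a i))))
      = (\<Prod>x\<leftarrow>diag_mat (principal_submat K (diagm (\<lambda>i. complex_of_real (a i)))). [:- x, 1:])"
    by (rule char_poly_upper_triangular[OF principal_submat_carrier])
  also have "diag_mat (principal_submat K (diagm (\<lambda>i. complex_of_real (a i)))) = cs"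
    unfolding diag_mat_def cs_def by (intro map_cong) auto
  finally have "char_poly (principal_submat K (diagm (\<lambda>i. complex_of_real (a i))))
      = (\<Prod>x\<leftarrow>cs. [:- x, 1:])" .
  moreover have "length (filter Q cs) = card {k \<in> K. Q (complex_of_real (a k))}" for Q
  proof -
    have "{i. i < length cs \<and> Q (cs ! i)} = {i. i < card K \<and> Q (complex_of_real (a (?ks ! i)))}"
      by (auto simp: cs_def)
    thus ?thesis
      unfolding length_filter_conv_card using card_sorted_list_of_set_nth[of K] by simp
  qed
  ultimately show ?thesis
    by (simp add: inertia_char_poly_linear_factors sign_counts_def)
qed

lemma inertia_principal_submat_conj_diag:
  fixes K :: "'n::{finite,linorder} set"
  assumes "U \<in> unitary_on K"
  shows "inertia (principal_submat K (U ** diagm (\<lambda>i. complex_of_real (a i)) ** adj_mat U))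
    = sign_counts K a"
proof -
  have "inertia (principal_submat K (U ** diagm (\<lambda>i. complex_of_real (a i)) ** adj_mat U))
      = inertia (principal_submat K (diagm (\<lambda>i. complex_of_real (a i))))"
    by (rule inertia_eq_if_char_poly_eq, rule char_poly_principal_submat_unitary_conj[OF assms]) auto
  thus ?thesis by (simp add: inertia_principal_submat_real_diagm)
qed

section \<open>Hermitian matrices with prescribed inertia on \<open>K\<close>\<close>

definition herm_inertia_set :: "'n::{finite,linorder} set \<Rightarrow> nat \<times> nat \<times> nat \<Rightarrow> 'n cmat set" where
  "herm_inertia_set K c = {S. hermitian_mat S \<and> inertia (principal_submat K S) = c}"

definition restrict_mat :: "'n set \<Rightarrow> complex^'n^'n \<Rightarrow> complex^'n^'n" where
  "restrict_mat K S = (\<chi> r s. if r \<in> K \<and> s \<in> K then S$r$s else 0)"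

lemma principal_submat_restrict_mat: "principal_submat K (restrict_mat K S) = principal_submat K S"
  by (rule principal_submat_cong) (simp add: restrict_mat_def)

lemma conj_diag_set_subset_herm_inertia_set: "conj_diag_set K c \<subseteq> herm_inertia_set K c"
  by (auto simp: conj_diag_set_def herm_inertia_set_def inertia_principal_submat_conj_diag
      intro: hermitian_conj_real_diagm)

lemma restrict_mat_in_conj_diag_set:
  assumes "S \<in> herm_inertia_set K c"
  shows "restrict_mat K S \<in> conj_diag_set K c"
proof -
  have "hermitian_mat (restrict_mat K S)"
    using assms by (auto simp: herm_inertia_set_def hermitian_mat_iff restrict_mat_def)
  moreover have "mat_supported_on K (restrict_mat K S)"
    by (auto simp: mat_supported_on_def restrict_mat_def)
  ultimately obtain U a where U: "U \<in> unitary_on K" and a_off: "\<And>i. i \<notin> K \<Longrightarrow> a i = 0"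
    and S: "restrict_mat K S = U ** diagm (\<lambda>i. complex_of_real (a i)) ** adj_mat U"
    using hermitian_spectral_on unfolding unitary_on_def by blast
  have counts: "sign_counts K a = c"
    using inertia_principal_submat_conj_diag[OF U, of a] assms
    by (simp add: S[symmetric] principal_submat_restrict_mat herm_inertia_set_def)
  show ?thesis unfolding S using U a_off counts by (rule conj_diag_setI)
qed

lemma path_connected_herm_inertia_set: "path_connected (herm_inertia_set K c)"
  unfolding path_connected_def
proof (intro ballI)
  fix S1 S2 assume S: "S1 \<in> herm_inertia_set K c" "S2 \<in> herm_inertia_set K c"
  obtain g where g: "path g" "path_image g \<subseteq> conj_diag_set K c"
    "pathstart g = restrict_mat K S1" "pathfinish g = restrict_mat K S2"
    using path_connected_conj_diag_set[of K c] restrict_mat_in_conj_diag_set[OF S(1)]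
      restrict_mat_in_conj_diag_set[OF S(2)]
    unfolding path_connected_def by blast
  define h where
    "h t = g t + (1 - t) *\<^sub>R (S1 - restrict_mat K S1) + t *\<^sub>R (S2 - restrict_mat K S2)" for t
  have "path h" using g(1) unfolding path_def h_def by (intro continuous_intros)
  moreover have "h t \<in> herm_inertia_set K c" if "t \<in> {0..1}" for t
  proof -
    have gt: "g t \<in> herm_inertia_set K c"
      using g(2) conj_diag_set_subset_herm_inertia_set[of K c] that
      unfolding path_image_def by blast
    hence "hermitian_mat (h t)"
      using S by (auto simp: herm_inertia_set_def hermitian_mat_iff h_def restrict_mat_def
          complex_cnj_scaleR)
    moreover have "principal_submat K (h t) = principal_submat K (g t)"
      by (rule principal_submat_cong) (simp add: h_def restrict_mat_def)
    ultimately show ?thesis using gt by (simp add: herm_inertia_set_def)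
  qed
  moreover have "pathstart h = S1" "pathfinish h = S2"
    using g(3,4) by (simp_all add: pathstart_def pathfinish_def h_def)
  ultimately show "\<exists>h. path h \<and> path_image h \<subseteq> herm_inertia_set K c \<and> pathstart h = S1 \<and> pathfinish h = S2"
    by (auto simp: path_image_def)
qed

section \<open>The quotient space and the standard chart of \<open>O_K\<close>\<close>

lemma rank_eq_card_if_pivot_columns:
  fixes M :: "'a::field^'m^'n"
  assumes pivot: "\<And>r. M $ r $ p r \<noteq> 0" and pivot_col: "\<And>r r'. r' \<noteq> r \<Longrightarrow> M $ r' $ p r = 0"
  shows "rank M = CARD('n)"
proof -
  define rw where "rw r = Finite_Cartesian_Product.row r M" for r
  have rows: "Finite_Cartesian_Product.rows M = range rw"
    by (auto simp: Finite_Cartesian_Product.rows_def rw_def)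
  have pivot_sum: "(\<Sum>r\<in>UNIV. c r *s rw r) $ p r0 = c r0 * M $ r0 $ p r0" for c r0
    using pivot_col by (simp add: sum_component rw_def Finite_Cartesian_Product.row_def
        if_distrib[where f = "\<lambda>x. _ * x"] cong: if_cong) (simp add: sum.remove[of _ r0])
  have "inj rw"
  proof
    fix r1 r2 assume "rw r1 = rw r2"
    hence "M $ r2 $ p r1 = M $ r1 $ p r1"
      by (metis Finite_Cartesian_Product.row_def rw_def vec_lambda_beta)
    thus "r1 = r2" using pivot pivot_col by metis
  qed
  have "vec.independent (Finite_Cartesian_Product.rows M)"
  proof (rule vec.independent_if_scalars_zero)
    show "finite (Finite_Cartesian_Product.rows M)" unfolding rows by simp
    fix f x assume s: "(\<Sum>x\<in>Finite_Cartesian_Product.rows M. f x *s x) = 0"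
      and x: "x \<in> Finite_Cartesian_Product.rows M"
    have "(\<Sum>r\<in>UNIV. f (rw r) *s rw r) = 0"
      using s unfolding rows by (simp add: sum.reindex[OF \<open>inj rw\<close>])
    hence "f (rw r) = 0" for r
      using pivot_sum[of "\<lambda>r. f (rw r)" r] pivot[of r] by simp
    thus "f x = 0" using x unfolding rows by auto
  qed
  hence "rank M = card (Finite_Cartesian_Product.rows M)"
    by (simp add: row_rank_def_gen vec.dim_eq_card_independent)
  thus ?thesis unfolding rows using \<open>inj rw\<close> by (simp add: card_image)
qed

lemma openin_quotient_topology:
  "openin (quotient_topology X f) U \<longleftrightarrow> U \<subseteq> f ` topspace X \<and> openin X {x \<in> topspace X. f x \<in> U}"
proof -
  have "istopology (\<lambda>U. U \<subseteq> f ` topspace X \<and> openin X {x \<in> topspace X. f x \<in> U})"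
    unfolding istopology_def
  proof (rule conjI; intro allI impI)
    fix S T
    assume "S \<subseteq> f ` topspace X \<and> openin X {x \<in> topspace X. f x \<in> S}"
      and "T \<subseteq> f ` topspace X \<and> openin X {x \<in> topspace X. f x \<in> T}"
    moreover have "{x \<in> topspace X. f x \<in> S \<inter> T} = {x \<in> topspace X. f x \<in> S} \<inter> {x \<in> topspace X. f x \<in> T}"
      by auto
    ultimately show "S \<inter> T \<subseteq> f ` topspace X \<and> openin X {x \<in> topspace X. f x \<in> S \<inter> T}"
      by (auto intro: openin_Int)
  next
    fix \<U> assume "\<forall>U\<in>\<U>. U \<subseteq> f ` topspace X \<and> openin X {x \<in> topspace X. f x \<in> U}"
    moreover have "{x \<in> topspace X. f x \<in> \<Union>\<U>} = (\<Union>U\<in>\<U>. {x \<in> topspace X. f x \<in> U})" by auto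
    ultimately show "\<Union>\<U> \<subseteq> f ` topspace X \<and> openin X {x \<in> topspace X. f x \<in> \<Union>\<U>}"
      by (auto intro!: openin_Union)
  qed
  thus ?thesis unfolding quotient_topology_def by simp
qed

lemma topspace_quotient_topology: "topspace (quotient_topology X f) = f ` topspace X"
proof
  show "topspace (quotient_topology X f) \<subseteq> f ` topspace X"
    unfolding topspace_def openin_quotient_topology by auto
  have "{x \<in> topspace X. f x \<in> f ` topspace X} = topspace X" by auto
  hence "openin (quotient_topology X f) (f ` topspace X)"
    unfolding openin_quotient_topology by simp
  thus "f ` topspace X \<subseteq> topspace (quotient_topology X f)"
    by (rule openin_subset)
qed

lemma quotient_map_quotient_topology: "quotient_map X (quotient_topology X f) f"
  unfolding quotient_map_def topspace_quotient_topology openin_quotient_topology by auto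

lemma topspace_BC_top: "topspace BC_top = orbit_cls ` B_pre"
  by (simp add: BC_top_def topspace_quotient_topology)

lemma invertible_idm: "invertible (idm :: complex^'n^'n)"
  unfolding invertible_def by auto

lemma orbit_cls_self: "p \<in> orbit_cls p"
  unfolding orbit_cls_def using invertible_idm by (cases p) force

lemma orbit_cls_eq:
  assumes "q \<in> orbit_cls p"
  shows "orbit_cls q = orbit_cls p"
proof -
  obtain T where T: "invertible T" and q: "q = (T ** fst p, T ** snd p)"
    using assms unfolding orbit_cls_def by blast
  obtain T' where T': "T ** T' = idm" "T' ** T = idm" using T unfolding invertible_def by blast
  hence "invertible T'" unfolding invertible_def by blast
  have "orbit_cls q \<subseteq> orbit_cls p"
    using T invertible_mult unfolding orbit_cls_def q by (fastforce simp: matrix_mul_assoc)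
  moreover have "(S ** fst p, S ** snd p) = ((S ** T') ** fst q, (S ** T') ** snd q)" for S
    using T' by (simp add: q matrix_mul_assoc) (metis matrix_mul_assoc matrix_mul_rid)
  hence "orbit_cls p \<subseteq> orbit_cls q"
    using \<open>invertible T'\<close> invertible_mult unfolding orbit_cls_def by blast
  ultimately show ?thesis by blast
qed

definition std_A :: "'n set \<Rightarrow> complex^'n^'n \<Rightarrow> complex^'n^'n" where
  "std_A K S = (\<chi> r i. if i \<in> K then (if r = i then -1 else 0) else S$r$i)"

definition std_B :: "'n set \<Rightarrow> complex^'n^'n \<Rightarrow> complex^'n^'n" where
  "std_B K S = (\<chi> r i. if i \<in> K then S$r$i else (if r = i then 1 else 0))"

definition std_chart :: "'n set \<Rightarrow> complex^'n^'n \<Rightarrow> ((complex^'n^'n) \<times> (complex^'n^'n)) set" where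
  "std_chart K S = orbit_cls (std_A K S, std_B K S)"

lemma std_form_std_pair: "std_form K S (std_A K S) (std_B K S)"
  unfolding std_form_def column_def by (auto simp: vec_cart_eq_iff std_A_def std_B_def axis_def)

lemma std_form_imp_std_pair:
  assumes "std_form K S A B"
  shows "A = std_A K S" and "B = std_B K S"
proof -
  have "A $ r $ i = column i A $ r" "B $ r $ i = column i B $ r" for r i
    by (simp_all add: column_def)
  thus "A = std_A K S" "B = std_B K S"
    using assms unfolding std_form_def vec_cart_eq_iff
    by (auto simp: std_A_def std_B_def axis_def column_def vec_cart_eq_iff)
qed

lemma std_pair_inj:
  assumes "std_A K S = std_A K S'" "std_B K S = std_B K S'"
  shows "S = S'"
proof -
  have "S $ r $ i = S' $ r $ i" for r i
  proof -
    have "std_A K S $ r $ i = std_A K S' $ r $ i" "std_B K S $ r $ i = std_B K S' $ r $ i"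
      using assms by simp_all
    thus ?thesis by (cases "i \<in> K") (auto simp: std_A_def std_B_def)
  qed
  thus ?thesis by (simp add: vec_cart_eq_iff)
qed

lemma rank_block_std_pair:
  fixes K :: "'n::finite set"
  shows "rank (block_mat (std_A K S) (std_B K S)) = CARD('n)"
  by (rule rank_eq_card_if_pivot_columns[where p = "\<lambda>r. if r \<in> K then Inl r else Inr r"])
    (auto simp: block_mat_def std_A_def std_B_def)

lemma std_pair_symmetric:
  assumes "hermitian_mat S"
  shows "std_A K S ** adj_mat (std_B K S) = std_B K S ** adj_mat (std_A K S)"
proof -
  have S: "cnj (S $ l $ r) = S $ r $ l" for r l
    using assms by (simp add: hermitian_mat_iff)
  have "(std_A K S ** adj_mat (std_B K S)) $ r $ l
      = (if r \<in> K then - S$r$l else 0) + (if l \<notin> K then S$r$l else 0)" for r l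
  proof -
    have "(std_A K S ** adj_mat (std_B K S)) $ r $ l
      = (\<Sum>i\<in>UNIV. (if i = r then (if r \<in> K then - cnj (S$l$r) else 0) else 0)
                   + (if i = l then (if l \<notin> K then S$r$l else 0) else 0))"
      unfolding matrix_matrix_mult_def
      by (simp only: vec_lambda_beta, intro sum.cong refl) (auto simp: std_A_def std_B_def)
    thus ?thesis by (simp add: sum.distrib S)
  qed
  moreover have "(std_B K S ** adj_mat (std_A K S)) $ r $ l
      = (if l \<in> K then - S$r$l else 0) + (if r \<notin> K then S$r$l else 0)" for r l
  proof -
    have "(std_B K S ** adj_mat (std_A K S)) $ r $ l
      = (\<Sum>i\<in>UNIV. (if i = l then (if l \<in> K then - S$r$l else 0) else 0)
                   + (if i = r then (if r \<notin> K then cnj (S$l$r) else 0) else 0))"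
      unfolding matrix_matrix_mult_def
      by (simp only: vec_lambda_beta, intro sum.cong refl) (auto simp: std_A_def std_B_def)
    thus ?thesis by (simp add: sum.distrib S)
  qed
  ultimately show ?thesis by (auto simp: vec_cart_eq_iff)
qed

lemma std_pair_in_B_pre: "hermitian_mat S \<Longrightarrow> (std_A K S, std_B K S) \<in> B_pre"
  unfolding B_pre_def using rank_block_std_pair std_pair_symmetric by auto

lemma std_chart_in_O_K: "hermitian_mat S \<Longrightarrow> std_chart K S \<in> O_K K"
  unfolding O_K_def topspace_BC_top std_chart_def
  using std_pair_in_B_pre orbit_cls_self std_form_std_pair by blast

text \<open>The standard form is unique in its orbit: the pivot columns force the transition matrix to
  be the identity.\<close>
lemma std_form_in_std_chart:
  assumes "(A, B) \<in> std_chart K S" and "std_form K S' A B"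
  shows "S' = S"
proof -
  obtain T where "invertible T" and A: "A = T ** std_A K S" and B: "B = T ** std_B K S"
    using assms(1) unfolding std_chart_def orbit_cls_def by auto
  have A': "A = std_A K S'" and B': "B = std_B K S'"
    using std_form_imp_std_pair[OF assms(2)] by auto
  have "T $ r $ i = idm $ r $ i" for r i
  proof (cases "i \<in> K")
    case True
    have "std_A K S' $ r $ i = (T ** std_A K S) $ r $ i" using A A' by simp
    hence "(if r = i then -1 else 0) = - T $ r $ i"
      using True by (simp add: matrix_matrix_mult_def std_A_def mult_if_zero)
    thus ?thesis by (auto simp: Finite_Cartesian_Product.mat_def split: if_splits)
  next
    case False
    have "std_B K S' $ r $ i = (T ** std_B K S) $ r $ i" using B B' by simp
    hence "(if r = i then 1 else 0) = T $ r $ i"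
      using False by (simp add: matrix_matrix_mult_def std_B_def mult_if_zero)
    thus ?thesis by (auto simp: Finite_Cartesian_Product.mat_def split: if_splits)
  qed
  hence "T = idm" by (simp add: vec_cart_eq_iff)
  hence "std_A K S = std_A K S'" "std_B K S = std_B K S'" using A A' B B' by simp_all
  thus ?thesis by (rule std_pair_inj[symmetric])
qed

lemma S_of_std_chart:
  assumes "hermitian_mat S"
  shows "S_of K (std_chart K S) = S"
  unfolding S_of_def
proof (rule the_equality)
  show "hermitian_mat S \<and> (\<exists>A B. (A, B) \<in> std_chart K S \<and> std_form K S A B)"
    using assms orbit_cls_self[of "(std_A K S, std_B K S)"] std_form_std_pair[of K S]
    by (auto simp: std_chart_def)
qed (use std_form_in_std_chart in blast)

lemma J_set_eq_image_std_chart: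
  "J_set K n0 np nn = std_chart K ` herm_inertia_set K (n0, np, nn)"
proof -
  have "O_K K = std_chart K ` {S. hermitian_mat S}"
  proof
    show "O_K K \<subseteq> std_chart K ` {S. hermitian_mat S}"
    proof
      fix c assume "c \<in> O_K K"
      then obtain A B S p where "(A, B) \<in> c" "hermitian_mat S" "std_form K S A B"
        and "p \<in> B_pre" "c = orbit_cls p"
        unfolding O_K_def topspace_BC_top by blast
      hence "c = std_chart K S"
        using orbit_cls_eq std_form_imp_std_pair unfolding std_chart_def by metis
      thus "c \<in> std_chart K ` {S. hermitian_mat S}" using \<open>hermitian_mat S\<close> by blast
    qed
  qed (auto intro: std_chart_in_O_K)
  thus ?thesis
    by (auto simp: J_set_def herm_inertia_set_def S_K_eq_principal_submat S_of_std_chart inertia_def)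
qed

lemma continuous_map_std_chart:
  "continuous_map (top_of_set {S. hermitian_mat S}) BC_top (std_chart (K :: 'n::finite set))"
proof -
  have "continuous_on UNIV (std_A K)"
    unfolding std_A_def
  proof (intro continuous_on_vec_lambda)
    fix r i show "continuous_on UNIV (\<lambda>S. if i \<in> K then (if r = i then -1 else 0) else S $ r $ i)"
      by (cases "i \<in> K") (auto intro!: continuous_on_component continuous_on_id)
  qed
  moreover have "continuous_on UNIV (std_B K)"
    unfolding std_B_def
  proof (intro continuous_on_vec_lambda)
    fix r i show "continuous_on UNIV (\<lambda>S. if i \<in> K then S $ r $ i else (if r = i then 1 else 0))"
      by (cases "i \<in> K") (auto intro!: continuous_on_component continuous_on_id)
  qed
  ultimately have "continuous_on UNIV (\<lambda>S. (std_A K S, std_B K S))"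
    by (rule continuous_on_Pair)
  hence "continuous_map (top_of_set {S. hermitian_mat S}) (top_of_set B_pre) (\<lambda>S. (std_A K S, std_B K S))"
    using std_pair_in_B_pre
    by (auto simp: continuous_map_in_subtopology intro: continuous_on_subset)
  moreover have "continuous_map (top_of_set B_pre) BC_top orbit_cls"
    unfolding BC_top_def by (intro quotient_imp_continuous_map quotient_map_quotient_topology)
  ultimately show ?thesis
    unfolding std_chart_def by (rule continuous_map_compose[unfolded o_def])
qed

theorem lemma7p3:
  fixes K :: "'n::{finite,linorder} set" and d n0 np :: nat
  assumes "CARD('n) = 2 * d" and "d \<ge> 2"
    and "K \<noteq> {}"
    and "n0 \<le> card K" and "np \<le> card K - n0"
  shows "path_connectedin (subtopology BC_top (O_K K)) (J_set K n0 np (card K - n0 - np))"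
proof -
  let ?H = "herm_inertia_set K (n0, np, card K - n0 - np)"
  have "continuous_map (top_of_set {S. hermitian_mat S}) (subtopology BC_top (O_K K)) (std_chart K)"
    using continuous_map_std_chart std_chart_in_O_K by (auto simp: continuous_map_in_subtopology)
  moreover have "path_connectedin (top_of_set {S. hermitian_mat S}) ?H"
    using path_connected_herm_inertia_set
    by (auto simp: path_connectedin_subtopology path_connectedin_euclidean herm_inertia_set_def)
  ultimately show ?thesis
    unfolding J_set_eq_image_std_chart by (rule path_connectedin_continuous_map_image)
qed

end
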